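(* Let $\mathbb{X},\mathbb{Y}$ be finite-dimensional real Banach spaces, $T\in\mathbb{L}(\mathbb{X},\mathbb{Y})$, and let $F$ be a face of $B_{\mathbb{X}}$ with $T(F)\neq\{0\}$. Then $T$ preserves parallel pairs contained in $F$ (i.e. $(Tx,Ty)$ is a parallel pair in $\mathbb{Y}$ for all $x,y\in F$) if and only if one of the following holds: (i) $\dim(\mathrm{span}\,T(F))=1$; (ii) there exists $u\in F$ such that $J(Tu)\subset J(Tv)$ for all $v\in F\setminus\ker T$.
   Context: A face of $B_{\mathbb{X}}$ is a nonempty convex subset $F\subset S_{\mathbb{X}}$ such that whenever $x_1,x_2\in S_{\mathbb{X}}$, $0<t<1$ and $(1-t)x_1+tx_2\in F$, then $x_1,x_2\in F$. For non-zero $y$, $J(y)=\{g\in S_{\mathbb{Y}^*}: g(y)=\|y\|\}$. $(x,y)$ is a parallel pair if $\|x+\lambda y\|=\|x\|+\|y\|$ for some scalar $\lambda$ with $|\lambda|=1$. *)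

theory Defs
  imports "HOL-Analysis.Analysis"
begin

text \<open>Finite-dimensional real normed space (such a space is automatically Banach).\<close>
definition fin_dim_space :: "'a::real_normed_vector itself \<Rightarrow> bool" where
  "fin_dim_space _ \<longleftrightarrow> (\<exists>B::'a set. finite B \<and> span B = UNIV)"

definition face_of_ball :: "'a::real_normed_vector set \<Rightarrow> bool" where
  "face_of_ball F \<longleftrightarrow> F \<noteq> {} \<and> convex F \<and> F \<subseteq> sphere 0 1 \<and>
     (\<forall>x1\<in>sphere 0 1. \<forall>x2\<in>sphere 0 1. \<forall>t::real. 0 < t \<and> t < 1 \<and>
        (1 - t) *\<^sub>R x1 + t *\<^sub>R x2 \<in> F \<longrightarrow> x1 \<in> F \<and> x2 \<in> F)"

text \<open>Duality map: norm-one continuous linear functionals attaining the norm at y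
  (used only for nonzero y).\<close>
definition Jmap :: "'b::real_normed_vector \<Rightarrow> ('b \<Rightarrow> real) set" where
  "Jmap y = {g. bounded_linear g \<and> onorm g = 1 \<and> g y = norm y}"

definition parallel_pair :: "'a::real_normed_vector \<Rightarrow> 'a \<Rightarrow> bool" where
  "parallel_pair x y \<longleftrightarrow> (\<exists>c::real. \<bar>c\<bar> = 1 \<and> norm (x + c *\<^sub>R y) = norm x + norm y)"

end

(*
  Let K = T(F), a convex set. If all pairs in K are parallel, the norm is additive on every
  segment [a, b] of K that avoids 0. Indeed, if ||a - b|| = ||a|| + ||b||, let w be the point of
  [a, b] with ||a - w|| = ||a||, hence ||b - w|| = ||b||. For z on the segment close to w the
  relation ||a - z|| = ||a|| + ||z|| (or its analogue with b) is impossible, so parallelism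
  makes (a, z) and (z, b) additive pairs. The norm is therefore affine on two overlapping
  subsegments, hence on all of [a, b], and ||a + b|| = ||a|| + ||b||. When span K has dimension
  at least 2, a midpoint argument shows that no segment of K passes through 0, so the norm is
  additive on all of K. If Tu lies in the relative interior of K, every Tv lies on a segment of K
  that extends beyond Tu, and additivity forces each norming functional of Tu to norm Tv.
  Conversely, a norming functional of Tu (Hahn-Banach) then norms every vector of K, which makes
  all pairs additive; in a one-dimensional span all pairs are parallel anyway.
*)

theory Submission
  imports Defs
begin

section \<open>Norming functionals in finite dimension\<close>

definition linear_on :: "'a::real_vector set \<Rightarrow> ('a \<Rightarrow> real) \<Rightarrow> bool" where
  "linear_on V g \<longleftrightarrow>
     (\<forall>x\<in>V. \<forall>y\<in>V. g (x + y) = g x + g y) \<and> (\<forall>c. \<forall>x\<in>V. g (c *\<^sub>R x) = c * g x)"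

lemma span_insert_subspace:
  assumes "subspace V"
  shows "span (insert x V) = {v + t *\<^sub>R x | v t. v \<in> V}"
proof -
  have "span V = V" using assms by simp
  show ?thesis
    unfolding span_insert \<open>span V = V\<close>
  proof (intro set_eqI iffI)
    fix z assume "z \<in> {z. \<exists>k. z - k *\<^sub>R x \<in> V}"
    then obtain k where "z - k *\<^sub>R x \<in> V" by blast
    then show "z \<in> {v + t *\<^sub>R x | v t. v \<in> V}" by force
  next
    fix z assume "z \<in> {v + t *\<^sub>R x | v t. v \<in> V}"
    then obtain v t where "v \<in> V" "z = v + t *\<^sub>R x" by blast
    then show "z \<in> {z. \<exists>k. z - k *\<^sub>R x \<in> V}" by (auto intro!: exI[of _ t])
  qed
qed

lemma subspace_insert_coeff_unique:
  assumes "subspace V" "x \<notin> V" "v \<in> V" "v' \<in> V" "v + t *\<^sub>R x = v' + t' *\<^sub>R x"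
  shows "t = t'"
proof (rule ccontr)
  assume "t \<noteq> t'"
  have "(v' - v) \<in> V" using assms subspace_diff by blast
  moreover have "v' - v = (t - t') *\<^sub>R x" using assms(5) by (simp add: algebra_simps)
  ultimately have "(1 / (t - t')) *\<^sub>R ((t - t') *\<^sub>R x) \<in> V"
    using assms(1) subspace_scale by metis
  then show False using \<open>t \<noteq> t'\<close> assms(2) by simp
qed

lemma linear_on_extension:
  assumes V: "subspace V" and x: "x \<notin> V" and g: "linear_on V g"
  obtains g' where "linear_on (span (insert x V)) g'"
    and "\<And>v t. v \<in> V \<Longrightarrow> g' (v + t *\<^sub>R x) = g v + t * \<kappa>"
proof
  define r where "r z = (SOME t. z - t *\<^sub>R x \<in> V)" for z
  have r: "r (v + t *\<^sub>R x) = t" if "v \<in> V" for v t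
    unfolding r_def
    by (rule some_equality) (use that subspace_insert_coeff_unique[OF V x] in \<open>auto simp: diff_eq_eq\<close>)
  define g' where "g' z = g (z - r z *\<^sub>R x) + r z * \<kappa>" for z
  show g'_eq: "g' (v + t *\<^sub>R x) = g v + t * \<kappa>" if "v \<in> V" for v t
    using r[OF that] unfolding g'_def by simp
  show "linear_on (span (insert x V)) g'"
    unfolding linear_on_def span_insert_subspace[OF V]
  proof (intro conjI ballI allI, safe)
    fix v1 t1 v2 t2 assume v: "v1 \<in> V" "v2 \<in> V"
    have sum: "v1 + t1 *\<^sub>R x + (v2 + t2 *\<^sub>R x) = (v1 + v2) + (t1 + t2) *\<^sub>R x"
      by (simp add: algebra_simps)
    have "v1 + v2 \<in> V" using V v subspace_add by blast
    then have "g' (v1 + t1 *\<^sub>R x + (v2 + t2 *\<^sub>R x)) = g (v1 + v2) + (t1 + t2) * \<kappa>"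
      unfolding sum by (rule g'_eq)
    then show "g' (v1 + t1 *\<^sub>R x + (v2 + t2 *\<^sub>R x)) = g' (v1 + t1 *\<^sub>R x) + g' (v2 + t2 *\<^sub>R x)"
      using v g g'_eq unfolding linear_on_def by (simp add: algebra_simps)
  next
    fix c v t assume v: "v \<in> V"
    have scale: "c *\<^sub>R (v + t *\<^sub>R x) = c *\<^sub>R v + (c * t) *\<^sub>R x"
      by (simp add: algebra_simps)
    have "c *\<^sub>R v \<in> V" using V v subspace_scale by blast
    then have "g' (c *\<^sub>R (v + t *\<^sub>R x)) = g (c *\<^sub>R v) + (c * t) * \<kappa>"
      unfolding scale by (rule g'_eq)
    then show "g' (c *\<^sub>R (v + t *\<^sub>R x)) = c * g' (v + t *\<^sub>R x)"
      using v g g'_eq unfolding linear_on_def by (simp add: algebra_simps)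
  qed
qed

lemma dominated_extension_constant:
  assumes V: "subspace V" and g: "linear_on V g" and dom: "\<And>v. v \<in> V \<Longrightarrow> g v \<le> norm v"
  obtains \<kappa> where "\<And>w. w \<in> V \<Longrightarrow> g w - norm (w - x) \<le> \<kappa>"
    and "\<And>v. v \<in> V \<Longrightarrow> \<kappa> \<le> norm (v + x) - g v"
proof
  have separated: "g w - norm (w - x) \<le> norm (v + x) - g v" if "w \<in> V" "v \<in> V" for v w
  proof -
    have "g w + g v = g (w + v)" using g that unfolding linear_on_def by simp
    also have "\<dots> \<le> norm (w + v)" using dom V that subspace_add by blast
    also have "\<dots> \<le> norm (w - x) + norm (v + x)" using norm_triangle_ineq[of "w - x" "v + x"] by simp
    finally show ?thesis by simp
  qed
  define A where "A = (\<lambda>w. g w - norm (w - x)) ` V"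
  have "0 \<in> V" using V subspace_0 by blast
  then have "A \<noteq> {}" and "bdd_above A"
    unfolding A_def bdd_above_def using separated by blast+
  show "g w - norm (w - x) \<le> Sup A" if "w \<in> V" for w
    using that \<open>bdd_above A\<close> unfolding A_def by (auto intro: cSup_upper)
  show "Sup A \<le> norm (v + x) - g v" if "v \<in> V" for v
    using that \<open>A \<noteq> {}\<close> separated unfolding A_def by (auto intro: cSup_least)
qed

lemma dominated_on_insert:
  assumes V: "subspace V" and g: "linear_on V g" and dom: "\<And>v. v \<in> V \<Longrightarrow> g v \<le> norm v"
    and below: "\<And>w. w \<in> V \<Longrightarrow> g w - norm (w - x) \<le> \<kappa>"
    and above: "\<And>v. v \<in> V \<Longrightarrow> \<kappa> \<le> norm (v + x) - g v"
    and v: "v \<in> V"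
  shows "g v + t * \<kappa> \<le> norm (v + t *\<^sub>R x)"
proof -
  have gv: "g ((1 / s) *\<^sub>R v) = g v / s" and vs: "(1 / s) *\<^sub>R v \<in> V" for s
    using g v V subspace_scale unfolding linear_on_def by auto
  consider "t = 0" | "t > 0" | "t < 0" by linarith
  then show ?thesis
  proof cases
    case 1
    then show ?thesis using dom v by simp
  next
    case 2
    have "(1 / t) *\<^sub>R v + x = (1 / t) *\<^sub>R (v + t *\<^sub>R x)" using 2 by (simp add: algebra_simps)
    then have "\<kappa> \<le> norm (v + t *\<^sub>R x) / t - g v / t"
      using above[OF vs[of t]] 2 by (simp add: gv)
    then show ?thesis using 2 by (simp add: field_simps)
  next
    case 3
    define s where "s = - t"
    have s: "s > 0" "t = - s" using 3 by (simp_all add: s_def)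
    have "(1 / s) *\<^sub>R v - x = (1 / s) *\<^sub>R (v + t *\<^sub>R x)" using s by (simp add: algebra_simps)
    then have "g v / s - norm (v + t *\<^sub>R x) / s \<le> \<kappa>"
      using below[OF vs[of s]] s by (simp add: gv)
    then show ?thesis using s by (simp add: field_simps)
  qed
qed

lemma dominated_extension:
  fixes V :: "'a::real_normed_vector set"
  assumes V: "subspace V" and x: "x \<notin> V" and g: "linear_on V g"
    and dom: "\<And>v. v \<in> V \<Longrightarrow> g v \<le> norm v"
    and below: "\<And>w. w \<in> V \<Longrightarrow> g w - norm (w - x) \<le> \<kappa>"
    and above: "\<And>v. v \<in> V \<Longrightarrow> \<kappa> \<le> norm (v + x) - g v"
  obtains g' where "linear_on (span (insert x V)) g'"
    and "\<And>z. z \<in> span (insert x V) \<Longrightarrow> g' z \<le> norm z"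
    and "\<And>v. v \<in> V \<Longrightarrow> g' v = g v" and "g' x = \<kappa>"
proof -
  obtain g' where g': "linear_on (span (insert x V)) g'"
    and g'_eq: "\<And>v t. v \<in> V \<Longrightarrow> g' (v + t *\<^sub>R x) = g v + t * \<kappa>"
    using linear_on_extension[OF V x g] by metis
  have "g' z \<le> norm z" if "z \<in> span (insert x V)" for z
    using that g'_eq dominated_on_insert[OF V g dom below above]
    unfolding span_insert_subspace[OF V] by auto
  moreover have "g' v = g v" if "v \<in> V" for v
    using g'_eq[OF that, of 0] by simp
  moreover have "g 0 = 0"
    using g subspace_0[OF V] unfolding linear_on_def by (metis mult_zero_left scaleR_zero_left)
  then have "g' x = \<kappa>" using g'_eq[OF subspace_0[OF V], of 1] by simp
  ultimately show ?thesis using that g' by blast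
qed

lemma norming_functional_on_span:
  fixes y :: "'a::real_normed_vector"
  assumes C: "finite C" and y: "y \<noteq> 0"
  shows "\<exists>g. linear_on (span (insert y C)) g \<and> (\<forall>z\<in>span (insert y C). g z \<le> norm z) \<and> g y = norm y"
  using C
proof (induction C rule: finite_induct)
  case empty
  have lin0: "linear_on {0} (\<lambda>_. 0)" unfolding linear_on_def by simp
  obtain g where "linear_on (span {y, 0}) g" "\<And>z. z \<in> span {y, 0} \<Longrightarrow> g z \<le> norm z"
      "\<And>v. v \<in> {0} \<Longrightarrow> g v = 0" "g y = norm y"
    by (rule dominated_extension[OF subspace_single_0 _ lin0, where x = y and \<kappa> = "norm y"]) (use y in auto)
  moreover have "span {y, 0} = span {y}" by (metis insert_commute span_insert_0)
  ultimately show ?case by auto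
next
  case (insert b C)
  define V where "V = span (insert y C)"
  obtain g where g: "linear_on V g" "\<And>z. z \<in> V \<Longrightarrow> g z \<le> norm z" "g y = norm y"
    using insert.IH unfolding V_def by blast
  have V: "subspace V" and yV: "y \<in> V" unfolding V_def by (auto intro: span_base)
  have "span (insert b V) = span (insert b (insert y C))"
    unfolding V_def by (simp only: span_insert[of b] span_span)
  then have span_eq: "span (insert y (insert b C)) = span (insert b V)"
    by (simp add: insert_commute)
  show ?case
  proof (cases "b \<in> V")
    case True
    then have "span (insert b V) = V" using V by (simp add: insert_absorb)
    then show ?thesis using g span_eq by auto
  next
    case False
    obtain \<kappa> where \<kappa>: "\<And>w. w \<in> V \<Longrightarrow> g w - norm (w - b) \<le> \<kappa>"
        "\<And>v. v \<in> V \<Longrightarrow> \<kappa> \<le> norm (v + b) - g v"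
      using dominated_extension_constant[OF V g(1,2), where x = b] by blast
    obtain g' where "linear_on (span (insert b V)) g'"
      "\<And>z. z \<in> span (insert b V) \<Longrightarrow> g' z \<le> norm z" "\<And>v. v \<in> V \<Longrightarrow> g' v = g v" "g' b = \<kappa>"
      using dominated_extension[OF V False g(1,2) \<kappa>] by blast
    then show ?thesis unfolding span_eq using yV g(3) by metis
  qed
qed

lemma Jmap_nonempty:
  fixes y :: "'a::real_normed_vector"
  assumes "fin_dim_space TYPE('a)" and "y \<noteq> 0"
  shows "Jmap y \<noteq> {}"
proof -
  obtain B :: "'a set" where B: "finite B" "span B = UNIV"
    using assms(1) unfolding fin_dim_space_def by blast
  then have "span (insert y B) = UNIV" using span_mono[of B "insert y B"] by auto
  then obtain g where g: "linear_on UNIV g" "\<And>z. g z \<le> norm z" "g y = norm y"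
    using norming_functional_on_span[OF B(1) assms(2)] by auto
  have bound: "\<bar>g z\<bar> \<le> norm z" for z
  proof -
    have "g ((- 1) *\<^sub>R z) = (- 1) * g z" using g(1) unfolding linear_on_def by blast
    then show ?thesis using g(2)[of z] g(2)[of "- z"] by simp
  qed
  have "bounded_linear g"
    using g(1) bound unfolding linear_on_def by (intro bounded_linear_intro[where K=1]) auto
  moreover have "onorm g = 1"
  proof (rule antisym)
    show "onorm g \<le> 1" using bound by (intro onorm_bound) auto
    show "1 \<le> onorm g" using onorm[OF \<open>bounded_linear g\<close>, of y] g(3) assms(2) by simp
  qed
  ultimately show ?thesis using g(3) unfolding Jmap_def by blast
qed

lemma Jmap_le_norm: "g \<in> Jmap y \<Longrightarrow> g z \<le> norm z"
  using onorm[of g z] unfolding Jmap_def by simp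

lemma Jmap_linear: "g \<in> Jmap y \<Longrightarrow> linear g"
  unfolding Jmap_def by (simp add: bounded_linear.linear)

lemma Jmap_zero: "g \<in> Jmap y \<Longrightarrow> g \<in> Jmap 0"
  unfolding Jmap_def by (auto simp: linear_simps)

lemma Jmap_scaleR:
  assumes "0 < c"
  shows "Jmap (c *\<^sub>R y) = Jmap y"
  using assms unfolding Jmap_def by (auto simp: linear_simps)

lemma Jmap_add:
  assumes "norm (x + y) = norm x + norm y"
  shows "Jmap (x + y) = Jmap x \<inter> Jmap y"
proof (intro set_eqI iffI)
  fix g assume g: "g \<in> Jmap (x + y)"
  then have "g x + g y = norm x + norm y"
    using assms linear_add[OF Jmap_linear[OF g]] unfolding Jmap_def by simp
  moreover have "g x \<le> norm x" "g y \<le> norm y" using Jmap_le_norm[OF g] by auto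
  ultimately show "g \<in> Jmap x \<inter> Jmap y" using g unfolding Jmap_def by auto
next
  fix g assume "g \<in> Jmap x \<inter> Jmap y"
  then show "g \<in> Jmap (x + y)"
    using assms linear_add[OF Jmap_linear, of g x] unfolding Jmap_def by simp
qed

lemma norm_add_eq_if_common_Jmap:
  assumes "g \<in> Jmap x" "g \<in> Jmap y"
  shows "norm (x + y) = norm x + norm y"
proof -
  have "norm x + norm y = g (x + y)"
    using assms linear_add[OF Jmap_linear[OF assms(1)]] unfolding Jmap_def by simp
  also have "\<dots> \<le> norm (x + y)" using Jmap_le_norm[OF assms(1)] .
  finally show ?thesis using norm_triangle_ineq[of x y] by simp
qed

section \<open>Additivity of the norm on convex sets of parallel vectors\<close>

lemma parallel_pair_iff:
  "parallel_pair x y \<longleftrightarrow> norm (x + y) = norm x + norm y \<or> norm (x - y) = norm x + norm y"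
proof
  assume "parallel_pair x y"
  then obtain c :: real where "\<bar>c\<bar> = 1" "norm (x + c *\<^sub>R y) = norm x + norm y"
    unfolding parallel_pair_def by blast
  moreover have "c = 1 \<or> c = - 1" using \<open>\<bar>c\<bar> = 1\<close> by linarith
  ultimately show "norm (x + y) = norm x + norm y \<or> norm (x - y) = norm x + norm y" by auto
next
  assume "norm (x + y) = norm x + norm y \<or> norm (x - y) = norm x + norm y"
  then show "parallel_pair x y"
    unfolding parallel_pair_def by (metis abs_minus_cancel abs_one scaleR_minus1_left scaleR_one diff_conv_add_uminus)
qed

lemma norm_add_scaleR_eq:
  assumes "norm (x + y) = norm x + norm y" and "0 \<le> \<alpha>" "0 \<le> \<beta>"
  shows "norm (\<alpha> *\<^sub>R x + \<beta> *\<^sub>R y) = \<alpha> * norm x + \<beta> * norm y"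
proof -
  have lower: "a * norm u + b * norm v \<le> norm (a *\<^sub>R u + b *\<^sub>R v)"
    if "norm (u + v) = norm u + norm v" "0 \<le> b" "b \<le> a" for u v :: 'a and a b :: real
  proof -
    have split: "a *\<^sub>R (u + v) = (a *\<^sub>R u + b *\<^sub>R v) + (a - b) *\<^sub>R v"
      by (simp add: algebra_simps)
    have "a * norm (u + v) = norm (a *\<^sub>R (u + v))" using that by simp
    also have "\<dots> \<le> norm (a *\<^sub>R u + b *\<^sub>R v) + (a - b) * norm v"
      unfolding split using norm_triangle_ineq[of "a *\<^sub>R u + b *\<^sub>R v" "(a - b) *\<^sub>R v"] that by simp
    finally show ?thesis using that(1) by (simp add: algebra_simps)
  qed
  have "\<alpha> * norm x + \<beta> * norm y \<le> norm (\<alpha> *\<^sub>R x + \<beta> *\<^sub>R y)"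
    using lower[of x y \<beta> \<alpha>] lower[of y x \<alpha> \<beta>] assms by (cases "\<beta> \<le> \<alpha>") (simp_all add: add.commute)
  moreover have "norm (\<alpha> *\<^sub>R x + \<beta> *\<^sub>R y) \<le> \<alpha> * norm x + \<beta> * norm y"
    using norm_triangle_ineq[of "\<alpha> *\<^sub>R x" "\<beta> *\<^sub>R y"] assms by simp
  ultimately show ?thesis by linarith
qed

lemma norm_add_eq_if_parallel_near:
  assumes "parallel_pair a z" "norm (a - w) \<le> norm a" "2 * norm (w - z) < norm w"
  shows "norm (a + z) = norm a + norm z"
proof -
  have "norm (a - z) \<noteq> norm a + norm z"
  proof
    assume minus: "norm (a - z) = norm a + norm z"
    have "norm (a - z) \<le> norm (a - w) + norm (w - z)" using norm_triangle_ineq[of "a - w" "w - z"] by simp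
    moreover have "norm w \<le> norm z + norm (w - z)" using norm_triangle_ineq[of z "w - z"] by simp
    ultimately show False using assms(2,3) minus by linarith
  qed
  then show ?thesis using assms(1) unfolding parallel_pair_iff by blast
qed

lemma affine_on_intervals_glue:
  fixes f :: "real \<Rightarrow> real"
  assumes f1: "\<forall>t\<in>{p..q}. f t = \<alpha> + \<beta> * t" and f2: "\<forall>t\<in>{p'..q'}. f t = \<alpha>' + \<beta>' * t"
    and "p \<le> p'" "p' < q" "q \<le> q'"
  shows "\<forall>t\<in>{p..q'}. f t = \<alpha> + \<beta> * t"
proof -
  have "p' \<in> {p..q}" "p' \<in> {p'..q'}" "q \<in> {p..q}" "q \<in> {p'..q'}" using assms(3-5) by auto
  then have at_p': "\<alpha> + \<beta> * p' = \<alpha>' + \<beta>' * p'" and at_q: "\<alpha> + \<beta> * q = \<alpha>' + \<beta>' * q"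
    using f1 f2 by metis+
  then have "(\<beta> - \<beta>') * (q - p') = 0" by algebra
  then have "\<beta> = \<beta>'" using \<open>p' < q\<close> by simp
  moreover from this have "\<alpha> = \<alpha>'" using at_q by simp
  ultimately show ?thesis
  proof (intro ballI)
    fix t assume "t \<in> {p..q'}"
    then have "t \<in> {p..q} \<or> t \<in> {p'..q'}" using assms(3-5) by auto
    then show "f t = \<alpha> + \<beta> * t" using f1 f2 \<open>\<beta> = \<beta>'\<close> \<open>\<alpha> = \<alpha>'\<close> by auto
  qed
qed

lemma norm_affine_between_norm_add_eq:
  assumes add: "norm ((a + p *\<^sub>R d) + (a + q *\<^sub>R d)) = norm (a + p *\<^sub>R d) + norm (a + q *\<^sub>R d)"
    and "p < q"
  shows "\<exists>\<alpha> \<beta>. \<forall>t\<in>{p..q}. norm (a + t *\<^sub>R d) = \<alpha> + \<beta> * t"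
proof -
  define \<beta> where "\<beta> = (norm (a + q *\<^sub>R d) - norm (a + p *\<^sub>R d)) / (q - p)"
  have "norm (a + t *\<^sub>R d) = (norm (a + p *\<^sub>R d) - \<beta> * p) + \<beta> * t" if t: "t \<in> {p..q}" for t
  proof -
    define \<theta> where "\<theta> = (t - p) / (q - p)"
    have \<theta>: "0 \<le> \<theta>" "\<theta> \<le> 1" using t \<open>p < q\<close> by (auto simp: \<theta>_def)
    have "\<theta> * (q - p) = t - p" using \<open>p < q\<close> by (simp add: \<theta>_def)
    then have "(1 - \<theta>) * p + \<theta> * q = t" by (simp add: algebra_simps)
    moreover have "(1 - \<theta>) *\<^sub>R (a + p *\<^sub>R d) + \<theta> *\<^sub>R (a + q *\<^sub>R d) = a + ((1 - \<theta>) * p + \<theta> * q) *\<^sub>R d"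
      by (simp add: algebra_simps)
    ultimately have "a + t *\<^sub>R d = (1 - \<theta>) *\<^sub>R (a + p *\<^sub>R d) + \<theta> *\<^sub>R (a + q *\<^sub>R d)" by simp
    then have "norm (a + t *\<^sub>R d) = (1 - \<theta>) * norm (a + p *\<^sub>R d) + \<theta> * norm (a + q *\<^sub>R d)"
      using norm_add_scaleR_eq[OF add] \<theta> by simp
    moreover have "\<theta> * (norm (a + q *\<^sub>R d) - norm (a + p *\<^sub>R d)) = \<beta> * (t - p)"
      by (simp add: \<theta>_def \<beta>_def)
    ultimately show ?thesis by (simp add: algebra_simps)
  qed
  then show ?thesis by blast
qed

lemma splitting_point_of_segment:
  assumes "norm (a - b) = norm a + norm b" "a \<noteq> 0" "b \<noteq> 0"
  obtains t0 where "0 < t0" "t0 < 1"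
    "norm (a - (a + t0 *\<^sub>R (b - a))) = norm a" "norm (b - (a + t0 *\<^sub>R (b - a))) = norm b"
proof -
  define D where "D = norm (b - a)"
  have D: "D = norm a + norm b" "D > 0"
    using assms by (auto simp: D_def norm_minus_commute add_pos_nonneg)
  define t0 where "t0 = norm a / D"
  have t0: "0 < t0" "t0 < 1" "t0 * D = norm a" using D assms by (auto simp: t0_def field_simps)
  have "a - (a + t0 *\<^sub>R (b - a)) = - (t0 *\<^sub>R (b - a))"
    and "b - (a + t0 *\<^sub>R (b - a)) = (1 - t0) *\<^sub>R (b - a)" by (simp_all add: algebra_simps)
  then have "norm (a - (a + t0 *\<^sub>R (b - a))) = t0 * D" "norm (b - (a + t0 *\<^sub>R (b - a))) = (1 - t0) * D"
    using t0 by (simp_all add: D_def)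
  then show ?thesis using that t0 D by (simp add: algebra_simps)
qed

lemma norm_affine_on_parallel_segment:
  assumes par: "\<And>x y. x \<in> closed_segment a b \<Longrightarrow> y \<in> closed_segment a b \<Longrightarrow> parallel_pair x y"
    and zero: "0 \<notin> closed_segment a b"
    and minus: "norm (a - b) = norm a + norm b"
  shows "\<exists>\<alpha> \<beta>. \<forall>t\<in>{0..1}. norm (a + t *\<^sub>R (b - a)) = \<alpha> + \<beta> * t"
proof -
  define m where "m t = a + t *\<^sub>R (b - a)" for t
  have m_seg: "m t \<in> closed_segment a b" if "t \<in> {0..1}" for t
    using that unfolding m_def in_segment by (auto intro!: exI[of _ t] simp: algebra_simps)
  have "a \<noteq> 0" "b \<noteq> 0" using zero by auto
  then obtain t0 where t0: "0 < t0" "t0 < 1" "norm (a - m t0) = norm a" "norm (b - m t0) = norm b"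
    using splitting_point_of_segment[OF minus] unfolding m_def by blast
  define w where "w = m t0"
  have "w \<noteq> 0" using zero m_seg[of t0] t0 unfolding w_def by auto
  define D where "D = norm (b - a)"
  have "D > 0" using \<open>a \<noteq> 0\<close> minus by (auto simp: D_def norm_minus_commute add_pos_nonneg)
  have dist_w: "norm (w - m t) = \<bar>t0 - t\<bar> * D" for t
    by (simp add: w_def m_def D_def flip: scaleR_diff_left)
  define h where "h = norm w / (4 * D)"
  have "h * D = norm w / 4" using \<open>D > 0\<close> by (simp add: h_def)
  then have h: "h > 0" "2 * (h * D) < norm w" using \<open>D > 0\<close> \<open>w \<noteq> 0\<close> by (simp_all add: h_def)
  define t1 where "t1 = min 1 (t0 + h)"
  define t2 where "t2 = max 0 (t0 - h)"
  have t12: "t1 \<in> {0..1}" "t2 \<in> {0..1}" "0 < t1" "t2 < t1" "t2 < 1" "\<bar>t0 - t1\<bar> \<le> h" "\<bar>t0 - t2\<bar> \<le> h"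
    using t0 h by (auto simp: t1_def t2_def)
  have near: "2 * norm (w - m t) < norm w" if "\<bar>t0 - t\<bar> \<le> h" for t
    using h mult_right_mono[OF that, of D] \<open>D > 0\<close> unfolding dist_w by linarith
  have "norm (m 0 + m t1) = norm (m 0) + norm (m t1)"
    using norm_add_eq_if_parallel_near[OF par t0(3)[folded w_def, THEN eq_refl] near] m_seg t12
    by (simp add: m_def)
  then obtain \<alpha> \<beta> where left: "\<forall>t\<in>{0..t1}. norm (m t) = \<alpha> + \<beta> * t"
    using norm_affine_between_norm_add_eq[of a 0 "b - a" t1] t12 unfolding m_def by auto
  have "norm (m t2 + m 1) = norm (m t2) + norm (m 1)"
    using norm_add_eq_if_parallel_near[OF par t0(4)[folded w_def, THEN eq_refl] near] m_seg t12
    by (simp add: m_def add.commute)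
  then obtain \<alpha>' \<beta>' where right: "\<forall>t\<in>{t2..1}. norm (m t) = \<alpha>' + \<beta>' * t"
    using norm_affine_between_norm_add_eq[of a t2 "b - a" 1] t12 unfolding m_def by auto
  have "\<forall>t\<in>{0..1}. norm (m t) = \<alpha> + \<beta> * t"
    by (rule affine_on_intervals_glue[OF left right]) (use t12 in auto)
  then show ?thesis unfolding m_def by blast
qed

lemma norm_add_eq_if_parallel_on_segment:
  assumes par: "\<And>x y. x \<in> closed_segment a b \<Longrightarrow> y \<in> closed_segment a b \<Longrightarrow> parallel_pair x y"
    and zero: "0 \<notin> closed_segment a b"
  shows "norm (a + b) = norm a + norm b"
proof -
  have "parallel_pair a b" using par by simp
  then consider "norm (a + b) = norm a + norm b" | "norm (a - b) = norm a + norm b"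
    unfolding parallel_pair_iff by blast
  then show ?thesis
  proof cases
    case 2
    then obtain \<alpha> \<beta> where affine: "\<forall>t\<in>{0..1}. norm (a + t *\<^sub>R (b - a)) = \<alpha> + \<beta> * t"
      using norm_affine_on_parallel_segment[OF par zero] by blast
    have "a + b = 2 *\<^sub>R (a + (1 / 2) *\<^sub>R (b - a))" by (simp add: algebra_simps scaleR_2)
    then have "norm (a + b) = 2 * (\<alpha> + \<beta> / 2)" using affine by simp
    also have "\<dots> = norm a + norm b"
      using affine[rule_format, of 0] affine[rule_format, of 1] by simp
    finally show ?thesis .
  qed
qed

lemma opposite_if_zero_in_segment:
  assumes "0 \<in> closed_segment a b" "a \<noteq> 0" "b \<noteq> 0"
  obtains l where "l > 0" "b = (- l) *\<^sub>R a"
proof -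
  obtain u where u: "0 \<le> u" "u \<le> 1" "(1 - u) *\<^sub>R a + u *\<^sub>R b = 0"
    using assms(1) unfolding in_segment by auto
  then have "0 < u" "u < 1" using assms(2,3) by (auto simp: order.order_iff_strict)
  have "u *\<^sub>R b = - ((1 - u) *\<^sub>R a)" using u(3) by (metis eq_neg_iff_add_eq_0 add.commute)
  then have "(1 / u) *\<^sub>R (u *\<^sub>R b) = (- ((1 - u) / u)) *\<^sub>R a" by simp
  then have "b = (- ((1 - u) / u)) *\<^sub>R a" using \<open>0 < u\<close> by simp
  moreover have "(1 - u) / u > 0" using \<open>0 < u\<close> \<open>u < 1\<close> by simp
  ultimately show ?thesis using that by blast
qed

lemma zero_notin_segment_if_notin_span:
  assumes "a \<noteq> 0" "c \<notin> span {a}"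
  shows "0 \<notin> closed_segment a c"
proof
  assume "0 \<in> closed_segment a c"
  moreover have "c \<noteq> 0" using assms(2) span_zero by blast
  ultimately obtain l where "c = (- l) *\<^sub>R a" using opposite_if_zero_in_segment assms(1) by blast
  then show False using assms(2) span_scale[OF span_base[of a "{a}"], of "- l"] by simp
qed

lemma exists_notin_span_single:
  assumes "dim (span K) \<noteq> 1" "a \<in> K" "a \<noteq> 0"
  obtains c where "c \<in> K" "c \<notin> span {a}"
proof -
  have "\<not> K \<subseteq> span {a}"
  proof
    assume "K \<subseteq> span {a}"
    moreover have "span {a} \<subseteq> span K" using assms(2) by (simp add: span_mono)
    ultimately have "span K = span {a}" using span_minimal[of K "span {a}"] by auto
    moreover have "dim {a} = 1"
      using dim_eq_card_independent[of "{a}"] assms(3) by (simp add: independent_insert)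
    ultimately show False using assms(1) by (metis dim_span)
  qed
  then show ?thesis using that by blast
qed

lemma norm_add_eq_if_parallel_convex_notin_span:
  assumes K: "convex K" and par: "\<And>x y. x \<in> K \<Longrightarrow> y \<in> K \<Longrightarrow> parallel_pair x y"
    and "a \<in> K" "c \<in> K" "a \<noteq> 0" "c \<notin> span {a}"
  shows "norm (a + c) = norm a + norm c"
  using norm_add_eq_if_parallel_on_segment[OF _ zero_notin_segment_if_notin_span[OF assms(5,6)]]
    par closed_segment_subset[OF assms(3,4) K] by blast

lemma parallel_convex_no_opposite:
  assumes K: "convex K" and par: "\<And>x y. x \<in> K \<Longrightarrow> y \<in> K \<Longrightarrow> parallel_pair x y"
    and a: "a \<in> K" "a \<noteq> 0" and c: "c \<in> K" "c \<notin> span {a}"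
    and "l > 0" and b: "(- l) *\<^sub>R a \<in> K"
  shows False
proof -
  \<comment> \<open>for the midpoint d of a and c, additivity of (- l a, d), rescaled to (- a, a + c),
    would give norm c = norm a + norm (a + c) = 2 * norm a + norm c\<close>
  define d where "d = midpoint a c"
  have "d \<in> K" using closed_segment_subset[OF a(1) c(1) K] midpoint_in_closed_segment d_def by blast
  have c_eq: "c = 2 *\<^sub>R d - a" by (simp add: d_def midpoint_def algebra_simps)
  have "d \<notin> span {(- l) *\<^sub>R a}"
  proof
    assume "d \<in> span {(- l) *\<^sub>R a}"
    then obtain k where "d = k *\<^sub>R ((- l) *\<^sub>R a)" by (auto simp: span_singleton)
    then have "d \<in> span {a}" using span_scale[OF span_base[of a "{a}"], of "k * - l"] by simp
    then have "c \<in> span {a}" unfolding c_eq by (intro span_diff span_scale) (auto intro: span_base)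
    then show False using c(2) by blast
  qed
  then have "norm ((- l) *\<^sub>R a + d) = norm ((- l) *\<^sub>R a) + norm d"
    using norm_add_eq_if_parallel_convex_notin_span[OF K par b \<open>d \<in> K\<close>] a(2) \<open>l > 0\<close> by simp
  then have "norm ((1 / l) *\<^sub>R ((- l) *\<^sub>R a) + 2 *\<^sub>R d) = (1 / l) * norm ((- l) *\<^sub>R a) + 2 * norm d"
    using \<open>l > 0\<close> by (intro norm_add_scaleR_eq) auto
  moreover have "(1 / l) *\<^sub>R ((- l) *\<^sub>R a) + 2 *\<^sub>R d = c" using \<open>l > 0\<close> c_eq by simp
  moreover have "2 * norm d = norm a + norm c"
    using norm_add_eq_if_parallel_convex_notin_span[OF K par a(1) c(1) a(2) c(2)]
    by (simp add: d_def midpoint_def)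
  ultimately show False using \<open>l > 0\<close> a(2) by simp
qed

lemma norm_add_eq_if_parallel_convex:
  assumes K: "convex K" and par: "\<And>x y. x \<in> K \<Longrightarrow> y \<in> K \<Longrightarrow> parallel_pair x y"
    and dim: "dim (span K) \<noteq> 1" and "a \<in> K" "b \<in> K"
  shows "norm (a + b) = norm a + norm b"
proof (cases "a = 0 \<or> b = 0 \<or> 0 \<notin> closed_segment a b")
  case True
  have "\<And>x y. x \<in> closed_segment a b \<Longrightarrow> y \<in> closed_segment a b \<Longrightarrow> parallel_pair x y"
    using par closed_segment_subset[OF assms(4,5) K] by blast
  then show ?thesis using True norm_add_eq_if_parallel_on_segment by auto
next
  case False
  then obtain l where "l > 0" "b = (- l) *\<^sub>R a" using opposite_if_zero_in_segment by blast
  moreover obtain c where "c \<in> K" "c \<notin> span {a}" using exists_notin_span_single dim assms(4) False by blast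
  ultimately show ?thesis using parallel_convex_no_opposite[OF K par assms(4)] False assms(5) by blast
qed

section \<open>Relative interior points and the duality map\<close>

lemma convex_add_sum_scaleR:
  assumes S: "convex S" and C: "finite C" "0 \<notin> C" and p: "p \<in> S" "\<And>c. c \<in> C \<Longrightarrow> p + c \<in> S"
    and l: "\<And>c. c \<in> C \<Longrightarrow> 0 \<le> l c" "sum l C \<le> 1"
  shows "p + (\<Sum>c\<in>C. l c *\<^sub>R c) \<in> S"
proof -
  define w where "w c = (if c = 0 then 1 - sum l C else l c)" for c
  have "sum w C = sum l C" unfolding w_def using C(2) by (intro sum.cong) auto
  then have w1: "sum w (insert 0 C) = 1" using C by (simp add: w_def)
  have "(\<Sum>c\<in>insert 0 C. w c *\<^sub>R (p + c)) \<in> S"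
    by (rule convex_sum[OF _ S w1]) (use C p l in \<open>auto simp: w_def\<close>)
  also have "(\<Sum>c\<in>insert 0 C. w c *\<^sub>R (p + c)) = p + (\<Sum>c\<in>insert 0 C. w c *\<^sub>R c)"
    using w1 by (simp add: scaleR_add_right sum.distrib flip: scaleR_sum_left)
  also have "(\<Sum>c\<in>insert 0 C. w c *\<^sub>R c) = (\<Sum>c\<in>C. l c *\<^sub>R c)"
    using C by (simp add: w_def) (intro sum.cong, auto)
  finally show ?thesis .
qed

lemma barycentric_perturbation:
  fixes \<mu> :: "'c \<Rightarrow> real"
  assumes "finite C"
  obtains \<delta> :: real where "\<delta> > 0"
    and "\<And>c. c \<in> C \<Longrightarrow> 0 \<le> (1 + \<delta>) / (real (card C) + 1) - \<delta> * \<mu> c"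
    and "(\<Sum>c\<in>C. (1 + \<delta>) / (real (card C) + 1) - \<delta> * \<mu> c) \<le> 1"
proof
  define N where "N = real (card C) + 1"
  define M where "M = (\<Sum>c\<in>C. \<bar>\<mu> c\<bar>)"
  define \<delta> where "\<delta> = 1 / (N * (1 + M))"
  have "M \<ge> 0" "N \<ge> 1" by (simp_all add: M_def N_def sum_nonneg)
  then have \<delta>: "\<delta> > 0" "\<delta> * (1 + M) = 1 / N" by (simp_all add: \<delta>_def)
  then show "\<delta> > 0" by simp
  have "\<bar>\<mu> c\<bar> \<le> M" if "c \<in> C" for c
    unfolding M_def using assms that by (intro member_le_sum) auto
  then have "\<mu> c \<le> 1 + M" if "c \<in> C" for c
    using that by fastforce
  then have "\<delta> * \<mu> c \<le> \<delta> * (1 + M)" if "c \<in> C" for c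
    using \<delta>(1) that by (intro mult_left_mono) auto
  moreover have "1 / N \<le> (1 + \<delta>) / N" using \<delta>(1) \<open>N \<ge> 1\<close> by (simp add: divide_right_mono)
  ultimately show "0 \<le> (1 + \<delta>) / (real (card C) + 1) - \<delta> * \<mu> c" if "c \<in> C" for c
    unfolding N_def[symmetric] using that \<delta>(2) by (metis diff_ge_0_iff_ge order.trans)
  have "- (\<Sum>c\<in>C. \<mu> c) \<le> M"
    unfolding M_def using sum_mono[of C "\<lambda>c. - \<mu> c" "\<lambda>c. \<bar>\<mu> c\<bar>"] by (simp add: sum_negf)
  moreover have "card C / N \<le> 1" by (simp add: N_def)
  ultimately have "card C / N - (\<Sum>c\<in>C. \<mu> c) \<le> 1 + M" by linarith
  then have "\<delta> * (card C / N - (\<Sum>c\<in>C. \<mu> c)) \<le> \<delta> * (1 + M)"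
    using \<delta>(1) by (intro mult_left_mono) auto
  moreover have "(\<Sum>c\<in>C. (1 + \<delta>) / N - \<delta> * \<mu> c) = card C / N + \<delta> * (card C / N - (\<Sum>c\<in>C. \<mu> c))"
    by (simp add: sum_subtractf sum_distrib_left algebra_simps add_divide_distrib)
  moreover have "card C / N + 1 / N = 1" using \<open>N \<ge> 1\<close> by (simp add: N_def field_simps)
  ultimately show "(\<Sum>c\<in>C. (1 + \<delta>) / (real (card C) + 1) - \<delta> * \<mu> c) \<le> 1"
    unfolding N_def[symmetric] using \<delta>(2) by linarith
qed

lemma convex_exists_relative_interior_point:
  fixes S B :: "'a::real_vector set"
  assumes B: "finite B" "span B = UNIV" and S: "convex S" "S \<noteq> {}"
  obtains u where "u \<in> S" and "\<And>v. v \<in> S \<Longrightarrow> \<exists>\<delta>>0. u + \<delta> *\<^sub>R (u - v) \<in> S"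
proof -
  obtain p where p: "p \<in> S" using S(2) by blast
  obtain C where C: "C \<subseteq> (\<lambda>v. v - p) ` S" "independent C" "(\<lambda>v. v - p) ` S \<subseteq> span C"
    by (rule maximal_independent_subset)
  have "finite C" using independent_span_bound[OF B(1) C(2)] B(2) by auto
  have "0 \<notin> C" using C(2) dependent_zero by blast
  have pC: "p + c \<in> S" if "c \<in> C" for c using C(1) that by auto
  \<comment> \<open>u is the barycentre of the simplex with vertices p and p + c, c \<in> C\<close>
  define N where "N = real (card C) + 1"
  define u where "u = p + (\<Sum>c\<in>C. (1 / N) *\<^sub>R c)"
  have "u \<in> S" unfolding u_def
    by (rule convex_add_sum_scaleR[OF S(1) \<open>finite C\<close> \<open>0 \<notin> C\<close> p pC]) (auto simp: N_def)
  moreover have "\<exists>\<delta>>0. u + \<delta> *\<^sub>R (u - v) \<in> S" if "v \<in> S" for v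
  proof -
    have "v - p \<in> span C" using that C(3) by auto
    then obtain \<mu> where \<mu>: "v - p = (\<Sum>c\<in>C. \<mu> c *\<^sub>R c)" using span_finite[OF \<open>finite C\<close>] by auto
    obtain \<delta> where \<delta>: "\<delta> > 0" "\<And>c. c \<in> C \<Longrightarrow> 0 \<le> (1 + \<delta>) / N - \<delta> * \<mu> c"
      "(\<Sum>c\<in>C. (1 + \<delta>) / N - \<delta> * \<mu> c) \<le> 1"
      using barycentric_perturbation[OF \<open>finite C\<close>] unfolding N_def by blast
    have "u + \<delta> *\<^sub>R (u - v) = p + (1 + \<delta>) *\<^sub>R (u - p) - \<delta> *\<^sub>R (v - p)"
      by (simp add: algebra_simps)
    also have "\<dots> = p + (\<Sum>c\<in>C. ((1 + \<delta>) / N - \<delta> * \<mu> c) *\<^sub>R c)"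
      unfolding u_def \<mu> by (simp add: scaleR_sum_right scaleR_diff_left sum_subtractf)
    also have "\<dots> \<in> S"
      by (rule convex_add_sum_scaleR[OF S(1) \<open>finite C\<close> \<open>0 \<notin> C\<close> p pC \<delta>(2,3)])
    finally show ?thesis using \<delta>(1) by blast
  qed
  ultimately show ?thesis using that by blast
qed

lemma Jmap_subset_if_norm_add_eq:
  assumes add: "norm (w + v) = norm w + norm v" and "\<delta> > 0" and w: "u + \<delta> *\<^sub>R (u - v) = w"
  shows "Jmap u \<subseteq> Jmap v"
proof -
  have "(1 + \<delta>) *\<^sub>R u = w + \<delta> *\<^sub>R v" using w by (auto simp: algebra_simps)
  moreover have "norm (w + \<delta> *\<^sub>R v) = norm w + norm (\<delta> *\<^sub>R v)"
    using norm_add_scaleR_eq[OF add, of 1 \<delta>] \<open>\<delta> > 0\<close> by simp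
  ultimately have "Jmap ((1 + \<delta>) *\<^sub>R u) = Jmap w \<inter> Jmap (\<delta> *\<^sub>R v)" by (simp add: Jmap_add)
  then show ?thesis using \<open>\<delta> > 0\<close> by (simp add: Jmap_scaleR add_pos_pos)
qed

lemma nonzero_if_norm_add_eq:
  assumes add: "norm (w + v) = norm w + norm v" and "\<delta> > 0" and w: "u + \<delta> *\<^sub>R (u - v) = w"
    and "v \<noteq> 0"
  shows "u \<noteq> 0"
proof
  assume "u = 0"
  then have w': "w = (- \<delta>) *\<^sub>R v" using w by simp
  then have "w + v = (1 - \<delta>) *\<^sub>R v" by (simp add: algebra_simps)
  then have "\<bar>1 - \<delta>\<bar> * norm v = \<delta> * norm v + norm v"
    using add \<open>\<delta> > 0\<close> unfolding w' by simp
  moreover have "\<bar>1 - \<delta>\<bar> * norm v < (\<delta> + 1) * norm v"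
    using \<open>\<delta> > 0\<close> \<open>v \<noteq> 0\<close> by (intro mult_strict_right_mono) auto
  ultimately show False by (simp add: algebra_simps)
qed

lemma Jmap_inclusion_if_norm_add_eq_on_convex:
  fixes K B :: "'a::real_normed_vector set"
  assumes B: "finite B" "span B = UNIV" and K: "convex K" and "\<exists>y\<in>K. y \<noteq> 0"
    and add: "\<And>x y. x \<in> K \<Longrightarrow> y \<in> K \<Longrightarrow> norm (x + y) = norm x + norm y"
  obtains k where "k \<in> K" "k \<noteq> 0" "\<And>y. y \<in> K \<Longrightarrow> Jmap k \<subseteq> Jmap y"
proof -
  obtain k where k: "k \<in> K" and interior: "\<And>y. y \<in> K \<Longrightarrow> \<exists>\<delta>>0. k + \<delta> *\<^sub>R (k - y) \<in> K"
    using convex_exists_relative_interior_point[OF B K] assms(4) by blast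
  have "Jmap k \<subseteq> Jmap y \<and> (y \<noteq> 0 \<longrightarrow> k \<noteq> 0)" if y: "y \<in> K" for y
  proof -
    obtain \<delta> where "\<delta> > 0" "k + \<delta> *\<^sub>R (k - y) \<in> K" using interior[OF y] by blast
    then show ?thesis
      using Jmap_subset_if_norm_add_eq nonzero_if_norm_add_eq add[OF _ y] by blast
  qed
  then show ?thesis using that k assms(4) by blast
qed

lemma parallel_pair_if_in_span_single:
  assumes "x \<in> span {w}" "y \<in> span {w}"
  shows "parallel_pair x y"
proof -
  obtain \<alpha> \<beta> where "x = \<alpha> *\<^sub>R w" "y = \<beta> *\<^sub>R w" using assms by (auto simp: span_singleton)
  moreover have "\<bar>\<alpha> + \<beta>\<bar> = \<bar>\<alpha>\<bar> + \<bar>\<beta>\<bar> \<or> \<bar>\<alpha> - \<beta>\<bar> = \<bar>\<alpha>\<bar> + \<bar>\<beta>\<bar>" by linarith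
  ultimately show ?thesis unfolding parallel_pair_iff
    by (auto simp: distrib_right simp flip: scaleR_add_left scaleR_diff_left)
qed

lemma parallel_pair_if_dim_span_one:
  assumes "dim (span S) = 1" "x \<in> S" "y \<in> S"
  shows "parallel_pair x y"
proof -
  obtain C where C: "C \<subseteq> span S" "independent C" "span S \<subseteq> span C" "card C = dim (span S)"
    by (rule basis_exists)
  then obtain w where "C = {w}" using assms(1) by (auto simp: card_Suc_eq)
  then show ?thesis using C(3) assms(2,3) parallel_pair_if_in_span_single by (blast intro: span_base)
qed

lemma parallel_pair_if_Jmap_inclusion:
  fixes K :: "'a::real_normed_vector set"
  assumes "fin_dim_space TYPE('a)" and "k \<noteq> 0" and J: "\<forall>y\<in>K - {0}. Jmap k \<subseteq> Jmap y"
    and "x \<in> K" "y \<in> K"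
  shows "parallel_pair x y"
proof -
  obtain g where "g \<in> Jmap k" using Jmap_nonempty[OF assms(1,2)] by blast
  then have "g \<in> Jmap z" if "z \<in> K" for z using J that Jmap_zero by (cases "z = 0") auto
  then show ?thesis using norm_add_eq_if_common_Jmap parallel_pair_iff assms(4,5) by blast
qed

theorem mainTheorem11:
  fixes T :: "'a::real_normed_vector \<Rightarrow> 'b::real_normed_vector"
    and F :: "'a set"
  assumes "fin_dim_space TYPE('a)" and "fin_dim_space TYPE('b)"
    and "linear T"
    and "face_of_ball F"
    and "T ` F \<noteq> {0}"
  shows "(\<forall>x\<in>F. \<forall>y\<in>F. parallel_pair (T x) (T y)) \<longleftrightarrow>
         (dim (span (T ` F)) = 1 \<or>
          (\<exists>u\<in>F. T u \<noteq> 0 \<and> (\<forall>v\<in>F - {x. T x = 0}. Jmap (T u) \<subseteq> Jmap (T v))))"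
proof
  assume "\<forall>x\<in>F. \<forall>y\<in>F. parallel_pair (T x) (T y)"
  then have par: "\<And>a b. a \<in> T ` F \<Longrightarrow> b \<in> T ` F \<Longrightarrow> parallel_pair a b" by blast
  obtain B :: "'b set" where B: "finite B" "span B = UNIV"
    using assms(2) unfolding fin_dim_space_def by blast
  have "convex F" "F \<noteq> {}" using assms(4) unfolding face_of_ball_def by auto
  then have K: "convex (T ` F)" and nonzero: "\<exists>y\<in>T ` F. y \<noteq> 0"
    using convex_linear_image[OF assms(3)] assms(5) by auto
  show "dim (span (T ` F)) = 1 \<or> (\<exists>u\<in>F. T u \<noteq> 0 \<and> (\<forall>v\<in>F - {x. T x = 0}. Jmap (T u) \<subseteq> Jmap (T v)))"
  proof (cases "dim (span (T ` F)) = 1")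
    case False
    with norm_add_eq_if_parallel_convex[OF K par] obtain k where "k \<in> T ` F" "k \<noteq> 0"
      "\<And>y. y \<in> T ` F \<Longrightarrow> Jmap k \<subseteq> Jmap y"
      using Jmap_inclusion_if_norm_add_eq_on_convex[OF B K nonzero] by metis
    then show ?thesis by blast
  qed simp
next
  assume "dim (span (T ` F)) = 1 \<or> (\<exists>u\<in>F. T u \<noteq> 0 \<and> (\<forall>v\<in>F - {x. T x = 0}. Jmap (T u) \<subseteq> Jmap (T v)))"
  then show "\<forall>x\<in>F. \<forall>y\<in>F. parallel_pair (T x) (T y)"
  proof
    assume "\<exists>u\<in>F. T u \<noteq> 0 \<and> (\<forall>v\<in>F - {x. T x = 0}. Jmap (T u) \<subseteq> Jmap (T v))"
    then obtain u where "T u \<noteq> 0" "\<forall>y\<in>T ` F - {0}. Jmap (T u) \<subseteq> Jmap y" by blast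
    then show ?thesis using parallel_pair_if_Jmap_inclusion[OF assms(2)] by blast
  qed (use parallel_pair_if_dim_span_one in blast)
qed

end
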